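(* Let $(A,R)$ be a relationally complete cartesian discrete combinatory object, with meet $\wedge:A\times A\to A$, top element $\top\in A$, and generic function $@\in R$ (a partial function). Define the partial application $a\cdot b=@(a\wedge b)$ (associating to the left) and $A_\#=\{a\in A\mid\{(\top,a)\}\in R\}$. Then: (i) for every polynomial $p[x_1,\dots,x_n]$ over $(A,\cdot)$ with coefficients in $A_\#$, the partial function $A^n\rightharpoonup A$, $\vec a\mapsto p[\vec a]$, is in $R^{(n)}$; (ii) for all $n\in\mathbb{N}$ and $r\in R^{(n+1)}$ there is $e\in A_\#$ such that for all $a_1,\dots,a_n,b\in A$: $e\cdot a_1\cdots a_n$ is defined, and whenever $r(a_1,\dots,a_n,b)$ is defined, $e\cdot a_1\cdots a_n\cdot b$ is defined and equal to $r(a_1,\dots,a_n,b)$; (iii) $(A,\cdot,A_\#)$ is a weak relative PCA, and the uniform preorder structure on $A$ consisting of all relations contained in some partial function $(e\cdot -):A\rightharpoonup A$ with $e\in A_\#$ is equal to $R$.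
   Context: A uniform preorder is a pair $(A,R)$ with $A$ a set and $R\subseteq P(A\times A)$ such that $\mathrm{id}_A\in R$, $s\circ r\in R$ whenever $r,s\in R$, and $s\in R$ whenever $r\in R$ and $s\subseteq r$; it is a discrete combinatory object (DCO) if every $r\in R$ is single-valued. Monotone maps $f:(A,R)\to(B,S)$: functions with $\{(fa,fa')\mid(a,a')\in r\}\in S$ for $r\in R$, ordered by $f\le g$ iff $\{(fa,ga)\}\in S$; finite 2-products: terminal singleton, product $(A\times B,R\otimes S)$ with $R\otimes S$ the relations contained in some $r\times s$. $(A,R)$ is cartesian if the terminal projection and diagonal have right adjoints $\top:1\to A$ and $\wedge:A\times A\to A$ (adjunction $f\dashv g$: $\mathrm{id}\le gf$, $fg\le\mathrm{id}$). A cartesian $(A,R)$ is relationally complete if there is $@\in R$ such that for every $r\in R$ there is a total function $\tilde r$ with graph in $R$ satisfying: $(a\wedge b,c)\in r$ implies $(\tilde r(a)\wedge b,c)\in @$ for all $a,b,c$. Define $\wedge^{(0)}(\ast)=\top$ and $\wedge^{(n+1)}(\vec a,b)=\wedge^{(n)}(\vec a)\wedge b$, and $R^{(n)}=\{r\subseteq A^n\times A\mid \exists s\in R.\ r=s\circ\wedge^{(n)}\}$. A polynomial over $(A,\cdot)$ is a term built from variables, constants in $A$ and application; $p[\vec a]$ is its possibly undefined value. A weak relative PCA is a triple $(A,\cdot,A_\#)$ with $\cdot:A\times A\rightharpoonup A$ a partial binary operation and $A_\#\subseteq A$ closed under application (whenever defined) and containing elements $\mathsf{k},\mathsf{s}$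 such that for all $a,b,c\in A$: $\mathsf{k}\cdot a\cdot b$ is defined and equals $a$; $\mathsf{s}\cdot a\cdot b$ is defined; and if $a\cdot c\cdot(b\cdot c)$ is defined then $\mathsf{s}\cdot a\cdot b\cdot c$ is defined and equals it. *)

theory Defs
  imports Main
begin

definition uniform_preorder :: "'a set \<Rightarrow> ('a \<times> 'a) set set \<Rightarrow> bool" where
  "uniform_preorder A R \<longleftrightarrow>
     R \<subseteq> Pow (A \<times> A) \<and> Id_on A \<in> R \<and>
     (\<forall>r\<in>R. \<forall>s\<in>R. r O s \<in> R) \<and>
     (\<forall>r\<in>R. \<forall>s. s \<subseteq> r \<longrightarrow> s \<in> R)"

definition DCO :: "'a set \<Rightarrow> ('a \<times> 'a) set set \<Rightarrow> bool" where
  "DCO A R \<longleftrightarrow> uniform_preorder A R \<and> (\<forall>r\<in>R. single_valued r)"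

definition mono_map :: "'a set \<Rightarrow> ('a \<times> 'a) set set \<Rightarrow> 'b set \<Rightarrow> ('b \<times> 'b) set set
    \<Rightarrow> ('a \<Rightarrow> 'b) \<Rightarrow> bool" where
  "mono_map A R B S f \<longleftrightarrow> (\<forall>a\<in>A. f a \<in> B) \<and>
     (\<forall>r\<in>R. {(f a, f a') | a a'. (a, a') \<in> r} \<in> S)"

definition map_le :: "'a set \<Rightarrow> ('b \<times> 'b) set set \<Rightarrow> ('a \<Rightarrow> 'b) \<Rightarrow> ('a \<Rightarrow> 'b) \<Rightarrow> bool" where
  "map_le A S f g \<longleftrightarrow> {(f a, g a) | a. a \<in> A} \<in> S"

definition adjunction :: "'a set \<Rightarrow> ('a \<times> 'a) set set \<Rightarrow> 'b set \<Rightarrow> ('b \<times> 'b) set set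
    \<Rightarrow> ('a \<Rightarrow> 'b) \<Rightarrow> ('b \<Rightarrow> 'a) \<Rightarrow> bool" where
  "adjunction A R B S f g \<longleftrightarrow> mono_map A R B S f \<and> mono_map B S A R g \<and>
     map_le A R id (g \<circ> f) \<and> map_le B S (f \<circ> g) id"

definition terminal_R :: "(unit \<times> unit) set set" where
  "terminal_R = Pow UNIV"

definition relprod :: "('a \<times> 'a) set \<Rightarrow> ('b \<times> 'b) set \<Rightarrow> (('a \<times> 'b) \<times> ('a \<times> 'b)) set" where
  "relprod r s = {((a, b), (a', b')) | a b a' b'. (a, a') \<in> r \<and> (b, b') \<in> s}"

definition tensor :: "('a \<times> 'a) set set \<Rightarrow> ('b \<times> 'b) set set \<Rightarrow> (('a \<times> 'b) \<times> ('a \<times> 'b)) set set" where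
  "tensor R S = {t. \<exists>r\<in>R. \<exists>s\<in>S. t \<subseteq> relprod r s}"

text \<open>Cartesian: the terminal projection has right adjoint \<tp> (an element tp),
  and the diagonal has right adjoint the meet.\<close>
definition cartesian :: "'a set \<Rightarrow> ('a \<times> 'a) set set \<Rightarrow> 'a \<Rightarrow> ('a \<Rightarrow> 'a \<Rightarrow> 'a) \<Rightarrow> bool" where
  "cartesian A R tp meet \<longleftrightarrow>
     adjunction A R (UNIV :: unit set) terminal_R (\<lambda>_. ()) (\<lambda>_. tp) \<and>
     adjunction A R (A \<times> A) (tensor R R) (\<lambda>a. (a, a)) (\<lambda>(a, b). meet a b)"

definition rel_complete_with ::
    "'a set \<Rightarrow> ('a \<times> 'a) set set \<Rightarrow> ('a \<Rightarrow> 'a \<Rightarrow> 'a) \<Rightarrow> ('a \<times> 'a) set \<Rightarrow> bool" where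
  "rel_complete_with A R meet app \<longleftrightarrow> app \<in> R \<and>
     (\<forall>r\<in>R. \<exists>rt. (\<forall>a\<in>A. rt a \<in> A) \<and> {(a, rt a) | a. a \<in> A} \<in> R \<and>
        (\<forall>a\<in>A. \<forall>b\<in>A. \<forall>c\<in>A. (meet a b, c) \<in> r \<longrightarrow> (meet (rt a) b, c) \<in> app))"

text \<open>Elements of A^n are lists of length n over A;
  \<open>meet_n [] = tp\<close>, \<open>meet_n (as @ [b]) = meet (meet_n as) b\<close>.\<close>
definition meet_n :: "'a \<Rightarrow> ('a \<Rightarrow> 'a \<Rightarrow> 'a) \<Rightarrow> 'a list \<Rightarrow> 'a" where
  "meet_n tp meet xs = foldl meet tp xs"

definition Rn :: "'a set \<Rightarrow> ('a \<times> 'a) set set \<Rightarrow> 'a \<Rightarrow> ('a \<Rightarrow> 'a \<Rightarrow> 'a) \<Rightarrow> nat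
    \<Rightarrow> ('a list \<times> 'a) set set" where
  "Rn A R tp meet n = {r. \<exists>s\<in>R.
     r = {(v, c). v \<in> lists A \<and> length v = n \<and> (meet_n tp meet v, c) \<in> s}}"

text \<open>a \<cdot> b = @(a \<and> b), as a partial function (app is single-valued).\<close>
definition pap :: "('a \<Rightarrow> 'a \<Rightarrow> 'a) \<Rightarrow> ('a \<times> 'a) set \<Rightarrow> 'a \<Rightarrow> 'a \<Rightarrow> 'a option" where
  "pap meet app a b =
     (if \<exists>c. (meet a b, c) \<in> app then Some (THE c. (meet a b, c) \<in> app) else None)"

definition sharp :: "'a set \<Rightarrow> ('a \<times> 'a) set set \<Rightarrow> 'a \<Rightarrow> 'a set" where
  "sharp A R tp = {a \<in> A. {(tp, a)} \<in> R}"

fun apps :: "('a \<Rightarrow> 'a \<Rightarrow> 'a option) \<Rightarrow> 'a \<Rightarrow> 'a list \<Rightarrow> 'a option" where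
  "apps ap e [] = Some e"
| "apps ap e (a # as) = Option.bind (ap e a) (\<lambda>x. apps ap x as)"

text \<open>Polynomials: variables x_i (indexed from 0), constants, application.\<close>
datatype 'a pterm = Var nat | Const 'a | App "'a pterm" "'a pterm"

fun peval :: "('a \<Rightarrow> 'a \<Rightarrow> 'a option) \<Rightarrow> 'a list \<Rightarrow> 'a pterm \<Rightarrow> 'a option" where
  "peval ap v (Var i) = Some (v ! i)"
| "peval ap v (Const c) = Some c"
| "peval ap v (App p q) = Option.bind (peval ap v p) (\<lambda>x. Option.bind (peval ap v q) (\<lambda>y. ap x y))"

fun pvars :: "'a pterm \<Rightarrow> nat set" where
  "pvars (Var i) = {i}"
| "pvars (Const c) = {}"
| "pvars (App p q) = pvars p \<union> pvars q"

fun pconsts :: "'a pterm \<Rightarrow> 'a set" where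
  "pconsts (Var i) = {}"
| "pconsts (Const c) = {c}"
| "pconsts (App p q) = pconsts p \<union> pconsts q"

definition weak_rpca :: "'a set \<Rightarrow> ('a \<Rightarrow> 'a \<Rightarrow> 'a option) \<Rightarrow> 'a set \<Rightarrow> bool" where
  "weak_rpca A ap Ash \<longleftrightarrow>
     (\<forall>a\<in>A. \<forall>b\<in>A. \<forall>c. ap a b = Some c \<longrightarrow> c \<in> A) \<and>
     Ash \<subseteq> A \<and>
     (\<forall>a\<in>Ash. \<forall>b\<in>Ash. \<forall>c. ap a b = Some c \<longrightarrow> c \<in> Ash) \<and>
     (\<exists>k\<in>Ash. \<exists>s\<in>Ash. \<forall>a\<in>A. \<forall>b\<in>A. \<forall>c\<in>A.
        apps ap k [a, b] = Some a \<and>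
        apps ap s [a, b] \<noteq> None \<and>
        (\<forall>d. Option.bind (ap a c) (\<lambda>x. Option.bind (ap b c) (\<lambda>y. ap x y)) = Some d
              \<longrightarrow> apps ap s [a, b, c] = Some d))"

end

theory Submission
  imports Defs
begin

text \<open>The adjunction diagonal \<open>\<turnstile>\<close> meet makes the meet a pairing of relations in R,
  with projections in R; single-valuedness of the projections makes iterated meets injective,
  so relations on tuples can be read off relations on their meets. A polynomial then denotes
  a relation in R by induction on the term: pair the denotations of the two subterms and
  compose with app. Conversely, relational completeness curries: applying it to a relation
  \<open>s\<close> gives a total \<open>rt\<close> whose graph lies in R, and a realizer of that graph with n
  arguments is a realizer of \<open>s\<close> with n + 1 arguments; realizers of graphs of total \<open>f\<close>
  arise by the same step, by induction on n from the element \<open>f \<top>\<close>. K and S are the realizers of the polynomials \<open>x\<^sub>0\<close> and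
  \<open>x\<^sub>0 x\<^sub>2 (x\<^sub>1 x\<^sub>2)\<close>; every \<open>r \<in> R\<close> is realized by the curried form of
  \<open>\<pi>\<^sub>2 ; r\<close>, and every realized relation factors through \<open>\<langle>const e, id\<rangle> ; app\<close>.\<close>

lemma apps_snoc: "apps ap e (xs @ [y]) = Option.bind (apps ap e xs) (\<lambda>x. ap x y)"
  by (induction xs arbitrary: e) (auto split: Option.bind_split)

lemma meet_n_Nil [simp]: "meet_n tp meet [] = tp"
  by (simp add: meet_n_def)

lemma meet_n_snoc [simp]: "meet_n tp meet (xs @ [x]) = meet (meet_n tp meet xs) x"
  by (simp add: meet_n_def)

lemma snoc_image_subsetI:
  assumes "\<And>w x. w \<in> lists A \<Longrightarrow> x \<in> A \<Longrightarrow> length w = n \<Longrightarrow> (f (w @ [x]), g (w @ [x])) \<in> S"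
  shows "{(f v, g v) | v. v \<in> lists A \<and> length v = Suc n} \<subseteq> S"
proof
  fix p assume "p \<in> {(f v, g v) | v. v \<in> lists A \<and> length v = Suc n}"
  then obtain v where "p = (f v, g v)" "v \<in> lists A" "length v = Suc n"
    by blast
  then show "p \<in> S"
    using assms by (cases v rule: rev_exhaust) auto
qed

locale cartesian_uniform_preorder =
  fixes A :: "'a set" and R :: "('a \<times> 'a) set set" and tp :: 'a and meet :: "'a \<Rightarrow> 'a \<Rightarrow> 'a"
  assumes uniform_preorder: "uniform_preorder A R"
    and cartesian: "cartesian A R tp meet"
begin

lemma R_subset_carrier: "r \<in> R \<Longrightarrow> r \<subseteq> A \<times> A"
  using uniform_preorder unfolding uniform_preorder_def by auto

lemma subrel_in_R: "r \<in> R \<Longrightarrow> s \<subseteq> r \<Longrightarrow> s \<in> R"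
  using uniform_preorder unfolding uniform_preorder_def by auto

lemma relcomp_in_R: "r \<in> R \<Longrightarrow> s \<in> R \<Longrightarrow> r O s \<in> R"
  using uniform_preorder unfolding uniform_preorder_def by auto

lemma Id_on_in_R: "Id_on A \<in> R"
  using uniform_preorder unfolding uniform_preorder_def by auto

lemma top_in_carrier: "tp \<in> A"
  using cartesian unfolding cartesian_def adjunction_def mono_map_def by auto

lemma meet_in_carrier: "a \<in> A \<Longrightarrow> b \<in> A \<Longrightarrow> meet a b \<in> A"
  using cartesian unfolding cartesian_def adjunction_def mono_map_def by auto

lemma meet_n_in_carrier: "v \<in> lists A \<Longrightarrow> meet_n tp meet v \<in> A"
  by (induction v rule: rev_induct) (auto simp: top_in_carrier meet_in_carrier)

lemma to_top_in_R: "{(a, tp) | a. a \<in> A} \<in> R"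
  using cartesian unfolding cartesian_def adjunction_def map_le_def by auto

lemma diagonal_in_R: "{(a, meet a a) | a. a \<in> A} \<in> R"
  using cartesian unfolding cartesian_def adjunction_def map_le_def by auto

lemma meet_rel_in_R:
  assumes "r \<in> R" "s \<in> R"
  shows "{(meet a b, meet a' b') | a b a' b'. (a, a') \<in> r \<and> (b, b') \<in> s} \<in> R"
proof -
  have "relprod r s \<in> tensor R R"
    using assms unfolding tensor_def by auto
  then have "{(meet a b, meet a' b') | a b a' b'. ((a, b), (a', b')) \<in> relprod r s} \<in> R"
    using cartesian unfolding cartesian_def adjunction_def mono_map_def by fastforce
  then show ?thesis
    unfolding relprod_def by (rule subrel_in_R) blast
qed

text \<open>The counit of diagonal \<open>\<turnstile>\<close> meet lies in \<open>R \<otimes> R\<close>; its components are the projections.\<close>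

lemma projections_in_R:
  "{(meet a b, a) | a b. a \<in> A \<and> b \<in> A} \<in> R" "{(meet a b, b) | a b. a \<in> A \<and> b \<in> A} \<in> R"
proof -
  have "map_le (A \<times> A) (tensor R R) ((\<lambda>a. (a, a)) \<circ> (\<lambda>(a, b). meet a b)) id"
    using cartesian unfolding cartesian_def adjunction_def by blast
  then have "{((meet a b, meet a b), (a, b)) | a b. a \<in> A \<and> b \<in> A} \<in> tensor R R"
    unfolding map_le_def by (simp add: case_prod_beta)
  then obtain r s where "r \<in> R" "s \<in> R"
    and "{((meet a b, meet a b), (a, b)) | a b. a \<in> A \<and> b \<in> A} \<subseteq> relprod r s"
    unfolding tensor_def by blast
  then have "{(meet a b, a) | a b. a \<in> A \<and> b \<in> A} \<subseteq> r" "{(meet a b, b) | a b. a \<in> A \<and> b \<in> A} \<subseteq> s"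
    unfolding relprod_def by blast+
  with \<open>r \<in> R\<close> \<open>s \<in> R\<close> show "{(meet a b, a) | a b. a \<in> A \<and> b \<in> A} \<in> R" "{(meet a b, b) | a b. a \<in> A \<and> b \<in> A} \<in> R"
    by (auto intro: subrel_in_R)
qed

lemma pairing_in_R:
  assumes "r \<in> R" "s \<in> R"
  shows "{(x, meet y z) | x y z. (x, y) \<in> r \<and> (x, z) \<in> s} \<in> R"
proof (rule subrel_in_R)
  show "{(a, meet a a) | a. a \<in> A} O {(meet a b, meet a' b') | a b a' b'. (a, a') \<in> r \<and> (b, b') \<in> s} \<in> R"
    by (intro relcomp_in_R diagonal_in_R meet_rel_in_R assms)
  show "{(x, meet y z) | x y z. (x, y) \<in> r \<and> (x, z) \<in> s}
    \<subseteq> {(a, meet a a) | a. a \<in> A} O {(meet a b, meet a' b') | a b a' b'. (a, a') \<in> r \<and> (b, b') \<in> s}"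
    using R_subset_carrier[OF assms(1)] by blast
qed

lemma projection_n_in_R:
  "i < n \<Longrightarrow> {(meet_n tp meet v, v ! i) | v. v \<in> lists A \<and> length v = n} \<in> R"
proof (induction n)
  case 0
  then show ?case by simp
next
  case (Suc n)
  show ?case
  proof (cases "i = n")
    case True
    show ?thesis
      by (rule subrel_in_R[OF projections_in_R(2) snoc_image_subsetI])
        (force simp: True nth_append intro: meet_n_in_carrier)
  next
    case False
    then have "i < n" using Suc.prems by simp
    show ?thesis
      by (rule subrel_in_R[OF relcomp_in_R[OF projections_in_R(1) Suc.IH[OF \<open>i < n\<close>]] snoc_image_subsetI])
        (use \<open>i < n\<close> in \<open>force simp: nth_append intro: meet_n_in_carrier\<close>)
  qed
qed

lemma sharp_iff_const_in_R: "e \<in> sharp A R tp \<longleftrightarrow> e \<in> A \<and> {(a, e) | a. a \<in> A} \<in> R"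
proof
  assume e: "e \<in> sharp A R tp"
  then have "{(a, tp) | a. a \<in> A} O {(tp, e)} \<in> R"
    unfolding sharp_def by (blast intro: relcomp_in_R to_top_in_R)
  moreover have "{(a, e) | a. a \<in> A} \<subseteq> {(a, tp) | a. a \<in> A} O {(tp, e)}"
    by blast
  ultimately show "e \<in> A \<and> {(a, e) | a. a \<in> A} \<in> R"
    using e unfolding sharp_def by (blast intro: subrel_in_R)
next
  assume "e \<in> A \<and> {(a, e) | a. a \<in> A} \<in> R"
  moreover have "{(tp, e)} \<subseteq> {(a, e) | a. a \<in> A}"
    using top_in_carrier by blast
  ultimately show "e \<in> sharp A R tp"
    unfolding sharp_def by (blast intro: subrel_in_R)
qed

lemma top_sharp: "tp \<in> sharp A R tp"
  using to_top_in_R top_in_carrier by (simp add: sharp_iff_const_in_R)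

lemma sharp_closed_under_R:
  assumes "e \<in> sharp A R tp" "r \<in> R" "(e, c) \<in> r"
  shows "c \<in> sharp A R tp"
proof -
  have "{(tp, e)} O r \<in> R"
    using assms(1,2) unfolding sharp_def by (blast intro: relcomp_in_R)
  then have "{(tp, c)} \<in> R"
    by (rule subrel_in_R) (use assms(3) in blast)
  moreover have "c \<in> A"
    using assms(2,3) R_subset_carrier by blast
  ultimately show ?thesis
    unfolding sharp_def by blast
qed

lemma meet_sharp:
  assumes "a \<in> sharp A R tp" "b \<in> sharp A R tp"
  shows "meet a b \<in> sharp A R tp"
proof -
  have "{(x, meet y z) | x y z. (x, y) \<in> {(tp, a)} \<and> (x, z) \<in> {(tp, b)}} \<in> R"
    using assms unfolding sharp_def by (blast intro: pairing_in_R)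
  then have "{(tp, meet a b)} \<in> R"
    by (rule subrel_in_R) blast
  with assms show ?thesis
    unfolding sharp_def by (blast intro: meet_in_carrier)
qed

end

locale cartesian_dco = cartesian_uniform_preorder +
  assumes single_valued_R: "r \<in> R \<Longrightarrow> single_valued r"
begin

lemma meet_inject:
  assumes "a \<in> A" "b \<in> A" "a' \<in> A" "b' \<in> A" "meet a b = meet a' b'"
  shows "a = a' \<and> b = b'"
proof -
  let ?fst = "{(meet a b, a) | a b. a \<in> A \<and> b \<in> A}" and ?snd = "{(meet a b, b) | a b. a \<in> A \<and> b \<in> A}"
  have "(meet a b, a) \<in> ?fst" "(meet a b, b) \<in> ?snd"
    using assms(1,2) by blast+
  moreover have "(meet a b, a') \<in> ?fst" "(meet a b, b') \<in> ?snd"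
    using assms(3,4) unfolding assms(5) by blast+
  ultimately show ?thesis
    using single_valued_R[OF projections_in_R(1)] single_valued_R[OF projections_in_R(2)]
    by (auto dest: single_valuedD)
qed

lemma meet_n_inject:
  "v \<in> lists A \<Longrightarrow> w \<in> lists A \<Longrightarrow> length v = length w \<Longrightarrow>
    meet_n tp meet v = meet_n tp meet w \<Longrightarrow> v = w"
proof (induction v arbitrary: w rule: rev_induct)
  case Nil
  then show ?case by simp
next
  case (snoc x xs)
  then obtain ys y where w: "w = ys @ [y]"
    by (cases w rule: rev_exhaust) auto
  with snoc.prems have "xs \<in> lists A" "ys \<in> lists A" "x \<in> A" "y \<in> A" "length xs = length ys"
    by auto
  moreover have "meet (meet_n tp meet xs) x = meet (meet_n tp meet ys) y"
    using snoc.prems(4) w by simp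
  ultimately have "meet_n tp meet xs = meet_n tp meet ys" "x = y"
    using meet_inject meet_n_in_carrier by blast+
  with snoc.IH \<open>xs \<in> lists A\<close> \<open>ys \<in> lists A\<close> \<open>length xs = length ys\<close> show ?case
    using w by blast
qed

lemma Rn_intro:
  assumes "{(meet_n tp meet v, c) | v c. v \<in> lists A \<and> length v = n \<and> P v c} \<in> R" (is "?S \<in> R")
  shows "{(v, c). v \<in> lists A \<and> length v = n \<and> P v c} \<in> Rn A R tp meet n"
proof -
  have "(meet_n tp meet v, c) \<in> ?S \<longleftrightarrow> P v c" if "v \<in> lists A" "length v = n" for v c
    using that meet_n_inject[of v] by force
  then have "{(v, c). v \<in> lists A \<and> length v = n \<and> P v c}
      = {(v, c). v \<in> lists A \<and> length v = n \<and> (meet_n tp meet v, c) \<in> ?S}"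
    by auto
  with assms show ?thesis
    unfolding Rn_def by blast
qed

end

locale relationally_complete_dco = cartesian_dco +
  fixes app :: "('a \<times> 'a) set"
  assumes rel_complete: "rel_complete_with A R meet app"
begin

lemma app_in_R: "app \<in> R"
  using rel_complete unfolding rel_complete_with_def by blast

lemma rel_completeE:
  assumes "r \<in> R"
  obtains rt where "\<And>a. a \<in> A \<Longrightarrow> rt a \<in> A" and "{(a, rt a) | a. a \<in> A} \<in> R"
    and "\<And>a b c. a \<in> A \<Longrightarrow> b \<in> A \<Longrightarrow> (meet a b, c) \<in> r \<Longrightarrow> (meet (rt a) b, c) \<in> app"
proof -
  obtain rt where "\<forall>a\<in>A. rt a \<in> A" "{(a, rt a) | a. a \<in> A} \<in> R"
    and rt: "\<forall>a\<in>A. \<forall>b\<in>A. \<forall>c\<in>A. (meet a b, c) \<in> r \<longrightarrow> (meet (rt a) b, c) \<in> app"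
    using rel_complete assms unfolding rel_complete_with_def by blast
  moreover have "(meet (rt a) b, c) \<in> app" if "a \<in> A" "b \<in> A" "(meet a b, c) \<in> r" for a b c
    using rt that R_subset_carrier[OF assms] by blast
  ultimately show thesis
    using that by blast
qed

lemma pap_eq_Some_iff: "pap meet app a b = Some c \<longleftrightarrow> (meet a b, c) \<in> app"
proof -
  have the_app: "(THE c. (meet a b, c) \<in> app) = c" if "(meet a b, c) \<in> app" for c
    using that single_valued_R[OF app_in_R] unfolding single_valued_def by blast
  show ?thesis
  proof
    assume "pap meet app a b = Some c"
    then obtain c' where "(meet a b, c') \<in> app" "c = (THE c. (meet a b, c) \<in> app)"
      unfolding pap_def by (auto split: if_splits)
    then show "(meet a b, c) \<in> app"
      using the_app by simp
  next
    assume "(meet a b, c) \<in> app"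
    then show "pap meet app a b = Some c"
      unfolding pap_def using the_app by auto
  qed
qed

lemma polynomial_in_R:
  "pvars p \<subseteq> {..<n} \<Longrightarrow> pconsts p \<subseteq> sharp A R tp \<Longrightarrow>
    {(meet_n tp meet v, c) | v c. v \<in> lists A \<and> length v = n \<and> peval (pap meet app) v p = Some c} \<in> R"
proof (induction p)
  case (Var i)
  have "{(meet_n tp meet v, c) | v c. v \<in> lists A \<and> length v = n \<and> peval (pap meet app) v (Var i) = Some c}
     = {(meet_n tp meet v, v ! i) | v. v \<in> lists A \<and> length v = n}"
    by auto
  with Var show ?case
    using projection_n_in_R[of i n] by simp
next
  case (Const e)
  then have "{(a, e) | a. a \<in> A} \<in> R"
    by (simp add: sharp_iff_const_in_R)
  then show ?case
    by (rule subrel_in_R) (force intro: meet_n_in_carrier)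
next
  case (App p q)
  let ?S = "\<lambda>p. {(meet_n tp meet v, c) | v c. v \<in> lists A \<and> length v = n \<and> peval (pap meet app) v p = Some c}"
  have "?S p \<in> R" "?S q \<in> R"
    using App by simp_all
  then have "{(x, meet y z) | x y z. (x, y) \<in> ?S p \<and> (x, z) \<in> ?S q} O app \<in> R"
    by (intro relcomp_in_R pairing_in_R app_in_R)
  moreover have "?S (App p q) \<subseteq> {(x, meet y z) | x y z. (x, y) \<in> ?S p \<and> (x, z) \<in> ?S q} O app"
  proof
    fix u assume "u \<in> ?S (App p q)"
    then obtain v c where u: "u = (meet_n tp meet v, c)" "v \<in> lists A" "length v = n"
      and "peval (pap meet app) v (App p q) = Some c"
      by blast
    then obtain y z where "peval (pap meet app) v p = Some y" "peval (pap meet app) v q = Some z"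
      and "(meet y z, c) \<in> app"
      by (auto simp: bind_eq_Some_conv pap_eq_Some_iff)
    with u have "(meet_n tp meet v, meet y z) \<in> {(x, meet y z) | x y z. (x, y) \<in> ?S p \<and> (x, z) \<in> ?S q}"
      by blast
    with u \<open>(meet y z, c) \<in> app\<close> show "u \<in> {(x, meet y z) | x y z. (x, y) \<in> ?S p \<and> (x, z) \<in> ?S q} O app"
      by blast
  qed
  ultimately show ?case
    by (rule subrel_in_R)
qed

text \<open>For n + 1 arguments, relational completeness applied to the graph of \<open>f\<close> yields \<open>rt\<close>
  with \<open>rt a \<cdot> b = f (meet a b)\<close>, and the induction hypothesis realizes \<open>rt\<close> with n arguments.\<close>

lemma graph_realizer:
  assumes "\<And>a. a \<in> A \<Longrightarrow> f a \<in> A" "{(a, f a) | a. a \<in> A} \<in> R"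
  shows "\<exists>e \<in> sharp A R tp. \<forall>as \<in> lists A. length as = n \<longrightarrow>
           apps (pap meet app) e as = Some (f (meet_n tp meet as))"
  using assms
proof (induction n arbitrary: f)
  case 0
  have "f tp \<in> sharp A R tp"
    using 0 top_sharp top_in_carrier by (blast intro: sharp_closed_under_R)
  then show ?case
    by (intro bexI[of _ "f tp"]) simp_all
next
  case (Suc n)
  obtain rt where rt_carrier: "\<And>a. a \<in> A \<Longrightarrow> rt a \<in> A" and rt_graph: "{(a, rt a) | a. a \<in> A} \<in> R"
    and rt: "\<And>a b c. a \<in> A \<Longrightarrow> b \<in> A \<Longrightarrow> (meet a b, c) \<in> {(a, f a) | a. a \<in> A} \<Longrightarrow>
      (meet (rt a) b, c) \<in> app"
    using rel_completeE[OF Suc.prems(2)] by blast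
  obtain e where "e \<in> sharp A R tp"
    and e: "\<forall>as \<in> lists A. length as = n \<longrightarrow> apps (pap meet app) e as = Some (rt (meet_n tp meet as))"
    using Suc.IH[OF rt_carrier rt_graph] by blast
  have "apps (pap meet app) e as = Some (f (meet_n tp meet as))"
    if as_in: "as \<in> lists A" and len: "length as = Suc n" for as
  proof -
    obtain w x where as: "as = w @ [x]"
      using len by (cases as rule: rev_exhaust) auto
    with as_in len have w: "w \<in> lists A" "x \<in> A" "length w = n"
      by auto
    have "(meet (rt (meet_n tp meet w)) x, f (meet (meet_n tp meet w) x)) \<in> app"
      using w by (intro rt) (auto intro: meet_n_in_carrier meet_in_carrier)
    moreover have "apps (pap meet app) e w = Some (rt (meet_n tp meet w))"
      using e w by blast
    ultimately show ?thesis
      unfolding as by (simp add: apps_snoc pap_eq_Some_iff)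
  qed
  with \<open>e \<in> sharp A R tp\<close> show ?case
    by blast
qed

lemma curry_realizer:
  assumes "s \<in> R"
  shows "\<exists>e \<in> sharp A R tp. \<forall>as \<in> lists A. \<forall>b \<in> A. length as = n \<longrightarrow>
           apps (pap meet app) e as \<noteq> None \<and>
           (\<forall>c. (meet (meet_n tp meet as) b, c) \<in> s \<longrightarrow> apps (pap meet app) e (as @ [b]) = Some c)"
proof -
  obtain rt where rt_carrier: "\<And>a. a \<in> A \<Longrightarrow> rt a \<in> A" and rt_graph: "{(a, rt a) | a. a \<in> A} \<in> R"
    and rt: "\<And>a b c. a \<in> A \<Longrightarrow> b \<in> A \<Longrightarrow> (meet a b, c) \<in> s \<Longrightarrow> (meet (rt a) b, c) \<in> app"
    using rel_completeE[OF assms] by blast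
  obtain e where "e \<in> sharp A R tp"
    and e: "\<forall>as \<in> lists A. length as = n \<longrightarrow> apps (pap meet app) e as = Some (rt (meet_n tp meet as))"
    using graph_realizer[OF rt_carrier rt_graph] by blast
  have "apps (pap meet app) e as \<noteq> None \<and>
      (\<forall>c. (meet (meet_n tp meet as) b, c) \<in> s \<longrightarrow> apps (pap meet app) e (as @ [b]) = Some c)"
    if as_in: "as \<in> lists A" and "b \<in> A" and len: "length as = n" for as b
  proof -
    have "apps (pap meet app) e as = Some (rt (meet_n tp meet as))"
      using e as_in len by blast
    moreover have "(meet (rt (meet_n tp meet as)) b, c) \<in> app" if "(meet (meet_n tp meet as) b, c) \<in> s" for c
      using rt[OF meet_n_in_carrier[OF as_in] \<open>b \<in> A\<close> that] .
    ultimately show ?thesis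
      by (simp add: apps_snoc pap_eq_Some_iff)
  qed
  with \<open>e \<in> sharp A R tp\<close> show ?thesis
    by blast
qed

lemma polynomial_in_Rn:
  "pvars p \<subseteq> {..<n} \<Longrightarrow> pconsts p \<subseteq> sharp A R tp \<Longrightarrow>
    {(v, c). v \<in> lists A \<and> length v = n \<and> peval (pap meet app) v p = Some c} \<in> Rn A R tp meet n"
  by (rule Rn_intro) (rule polynomial_in_R)

lemma Rn_realizer:
  assumes "r \<in> Rn A R tp meet (Suc n)"
  shows "\<exists>e \<in> sharp A R tp. \<forall>as \<in> lists A. \<forall>b \<in> A. length as = n \<longrightarrow>
           apps (pap meet app) e as \<noteq> None \<and>
           (\<forall>c. (as @ [b], c) \<in> r \<longrightarrow> apps (pap meet app) e (as @ [b]) = Some c)"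
proof -
  obtain s where "s \<in> R" and r: "r = {(v, c). v \<in> lists A \<and> length v = Suc n \<and> (meet_n tp meet v, c) \<in> s}"
    using assms unfolding Rn_def by blast
  have "(as @ [b], c) \<in> r \<longleftrightarrow> as \<in> lists A \<and> b \<in> A \<and> length as = n \<and> (meet (meet_n tp meet as) b, c) \<in> s"
    for as b c
    unfolding r by auto
  with curry_realizer[OF \<open>s \<in> R\<close>, of n] show ?thesis
    by simp
qed

lemma polynomial_realizer:
  assumes "pvars p \<subseteq> {..<Suc n}" "pconsts p \<subseteq> sharp A R tp"
  shows "\<exists>e \<in> sharp A R tp. \<forall>as \<in> lists A. \<forall>b \<in> A. length as = n \<longrightarrow>
           apps (pap meet app) e as \<noteq> None \<and>
           (\<forall>c. peval (pap meet app) (as @ [b]) p = Some c \<longrightarrow> apps (pap meet app) e (as @ [b]) = Some c)"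
  using Rn_realizer[OF polynomial_in_Rn[OF assms]] by simp

lemma combinator_K: "\<exists>k \<in> sharp A R tp. \<forall>a \<in> A. \<forall>b \<in> A. apps (pap meet app) k [a, b] = Some a"
proof -
  obtain k where "k \<in> sharp A R tp" and k: "\<forall>as \<in> lists A. \<forall>b \<in> A. length as = 1 \<longrightarrow>
      (\<forall>c. peval (pap meet app) (as @ [b]) (Var 0) = Some c \<longrightarrow> apps (pap meet app) k (as @ [b]) = Some c)"
    using polynomial_realizer[of "Var 0" 1] by auto
  have "apps (pap meet app) k [a, b] = Some a" if "a \<in> A" "b \<in> A" for a b
    using k[rule_format, of "[a]" b a] that by simp
  with \<open>k \<in> sharp A R tp\<close> show ?thesis
    by blast
qed

lemma combinator_S:
  "\<exists>s \<in> sharp A R tp. \<forall>a \<in> A. \<forall>b \<in> A. \<forall>c \<in> A.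
     apps (pap meet app) s [a, b] \<noteq> None \<and>
     (\<forall>d. Option.bind (pap meet app a c) (\<lambda>x. Option.bind (pap meet app b c) (\<lambda>y. pap meet app x y)) = Some d
        \<longrightarrow> apps (pap meet app) s [a, b, c] = Some d)"
proof -
  let ?S = "App (App (Var 0) (Var 2)) (App (Var 1) (Var 2))"
  obtain s where "s \<in> sharp A R tp" and s: "\<forall>as \<in> lists A. \<forall>b \<in> A. length as = 2 \<longrightarrow>
      apps (pap meet app) s as \<noteq> None \<and>
      (\<forall>c. peval (pap meet app) (as @ [b]) ?S = Some c \<longrightarrow> apps (pap meet app) s (as @ [b]) = Some c)"
    using polynomial_realizer[of ?S 2] by (auto simp: numeral_2_eq_2)
  have "apps (pap meet app) s [a, b] \<noteq> None \<and>
     (\<forall>d. Option.bind (pap meet app a c) (\<lambda>x. Option.bind (pap meet app b c) (\<lambda>y. pap meet app x y)) = Some d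
        \<longrightarrow> apps (pap meet app) s [a, b, c] = Some d)" if "a \<in> A" "b \<in> A" "c \<in> A" for a b c
    using s[rule_format, of "[a, b]" c] that by simp
  with \<open>s \<in> sharp A R tp\<close> show ?thesis
    by blast
qed

lemma weak_rpca: "weak_rpca A (pap meet app) (sharp A R tp)"
proof -
  have "c \<in> A" if "pap meet app a b = Some c" for a b c
    using that R_subset_carrier[OF app_in_R] by (auto simp: pap_eq_Some_iff)
  moreover have "c \<in> sharp A R tp"
    if "a \<in> sharp A R tp" "b \<in> sharp A R tp" "pap meet app a b = Some c" for a b c
    using that meet_sharp app_in_R by (auto simp: pap_eq_Some_iff intro: sharp_closed_under_R)
  moreover have "sharp A R tp \<subseteq> A"
    unfolding sharp_def by blast
  moreover obtain k where "k \<in> sharp A R tp" "\<forall>a \<in> A. \<forall>b \<in> A. apps (pap meet app) k [a, b] = Some a"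
    using combinator_K by blast
  moreover obtain s where "s \<in> sharp A R tp" "\<forall>a \<in> A. \<forall>b \<in> A. \<forall>c \<in> A.
     apps (pap meet app) s [a, b] \<noteq> None \<and>
     (\<forall>d. Option.bind (pap meet app a c) (\<lambda>x. Option.bind (pap meet app b c) (\<lambda>y. pap meet app x y)) = Some d
        \<longrightarrow> apps (pap meet app) s [a, b, c] = Some d)"
    using combinator_S by blast
  ultimately show ?thesis
    unfolding weak_rpca_def by (intro conjI bexI[where x = k] bexI[where x = s]) blast+
qed

lemma representable_eq_R:
  "{r. \<exists>e \<in> sharp A R tp. r \<subseteq> {(a, c). a \<in> A \<and> pap meet app e a = Some c}} = R"
proof (intro set_eqI iffI)
  fix r
  assume "r \<in> {r. \<exists>e \<in> sharp A R tp. r \<subseteq> {(a, c). a \<in> A \<and> pap meet app e a = Some c}}"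
  then obtain e where e: "e \<in> sharp A R tp" and r: "r \<subseteq> {(a, c). a \<in> A \<and> pap meet app e a = Some c}"
    by blast
  have "{(x, meet y z) | x y z. (x, y) \<in> {(a, e) | a. a \<in> A} \<and> (x, z) \<in> Id_on A} O app \<in> R"
    using e by (intro relcomp_in_R pairing_in_R app_in_R Id_on_in_R) (simp add: sharp_iff_const_in_R)
  moreover have "r \<subseteq> {(x, meet y z) | x y z. (x, y) \<in> {(a, e) | a. a \<in> A} \<and> (x, z) \<in> Id_on A} O app"
  proof
    fix p
    assume "p \<in> r"
    with r obtain a c where "p = (a, c)" "a \<in> A" "(meet e a, c) \<in> app"
      by (auto simp: pap_eq_Some_iff)
    then show "p \<in> {(x, meet y z) | x y z. (x, y) \<in> {(a, e) | a. a \<in> A} \<and> (x, z) \<in> Id_on A} O app"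
      by blast
  qed
  ultimately show "r \<in> R"
    by (rule subrel_in_R)
next
  fix r
  assume "r \<in> R"
  then have "{(meet a b, b) | a b. a \<in> A \<and> b \<in> A} O r \<in> R"
    by (intro relcomp_in_R projections_in_R)
  from curry_realizer[OF this, of 0] obtain e where "e \<in> sharp A R tp"
    and e: "\<forall>b \<in> A. \<forall>c. (meet tp b, c) \<in> {(meet a b, b) | a b. a \<in> A \<and> b \<in> A} O r \<longrightarrow>
      apps (pap meet app) e [b] = Some c"
    by auto
  have "r \<subseteq> {(a, c). a \<in> A \<and> pap meet app e a = Some c}"
  proof clarify
    fix b c
    assume "(b, c) \<in> r"
    then have "b \<in> A"
      using R_subset_carrier[OF \<open>r \<in> R\<close>] by blast
    with \<open>(b, c) \<in> r\<close> have "(meet tp b, c) \<in> {(meet a b, b) | a b. a \<in> A \<and> b \<in> A} O r"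
      using top_in_carrier by blast
    with e \<open>b \<in> A\<close> show "b \<in> A \<and> pap meet app e b = Some c"
      by auto
  qed
  with \<open>e \<in> sharp A R tp\<close> show "r \<in> {r. \<exists>e \<in> sharp A R tp. r \<subseteq> {(a, c). a \<in> A \<and> pap meet app e a = Some c}}"
    by blast
qed

end

theorem proposition9p4:
  fixes A :: "'a set" and R :: "('a \<times> 'a) set set"
    and tp :: 'a and meet :: "'a \<Rightarrow> 'a \<Rightarrow> 'a" and app :: "('a \<times> 'a) set"
  assumes dco: "DCO A R"
    and cart: "cartesian A R tp meet"
    and rc: "rel_complete_with A R meet app"
  shows
    "(\<forall>n (p :: 'a pterm). pvars p \<subseteq> {..<n} \<and> pconsts p \<subseteq> sharp A R tp \<longrightarrow>
        {(v, c). v \<in> lists A \<and> length v = n \<and> peval (pap meet app) v p = Some c}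
          \<in> Rn A R tp meet n)
   \<and> (\<forall>n. \<forall>r \<in> Rn A R tp meet (Suc n). \<exists>e \<in> sharp A R tp.
        \<forall>as \<in> lists A. \<forall>b \<in> A. length as = n \<longrightarrow>
          apps (pap meet app) e as \<noteq> None \<and>
          (\<forall>c. (as @ [b], c) \<in> r \<longrightarrow> apps (pap meet app) e (as @ [b]) = Some c))
   \<and> weak_rpca A (pap meet app) (sharp A R tp)
   \<and> {r. \<exists>e \<in> sharp A R tp. r \<subseteq> {(a, c). a \<in> A \<and> pap meet app e a = Some c}} = R"
proof -
  interpret relationally_complete_dco A R tp meet app
    using dco cart rc by unfold_locales (auto simp: DCO_def)
  show ?thesis
    using polynomial_in_Rn Rn_realizer weak_rpca representable_eq_R by blast
qed

end
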